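(* Let $D\ge1$, let $Q_D$ be the $D$-dimensional hypercube on $X=\{0,1\}^D$ with adjacency matrix $A$. For $1\le i<j\le D$ put $B_{ij}=\alpha^*_iA\alpha^*_j-\alpha^*_jA\alpha^*_i$. Then for every $S\subseteq\{1,\ldots,D\}$, $$B_{ij}w_S=\begin{cases}-4\,w_{(S\cup\{j\})\setminus\{i\}} & \text{if } i\in S,\ j\notin S,\\ 4\,w_{(S\cup\{i\})\setminus\{j\}} & \text{if } i\notin S,\ j\in S,\\ 0&\text{otherwise.}\end{cases}$$
   Context: $Q_D$ is the graph with vertex set $X=\{0,1\}^D$ (sequences $x=(x_1,\ldots,x_D)$), two vertices adjacent iff they differ in exactly one coordinate. Matrices are real with rows and columns indexed by $X$ and act on $V=\mathbb{R}^X$. For $1\le i\le D$, $\alpha^*_i$ is the diagonal matrix with $(x,x)$-entry $1$ if $x_i=0$ and $-1$ if $x_i=1$. For $S\subseteq\{1,\ldots,D\}$, $w_S\in V$ is the vector with $x$-entry $2^{-D/2}\prod_{k\in S}(-1)^{x_k}$ (equivalently $w_S=w_1\otimes\cdots\otimes w_D$ with $w_k=u=\tfrac1{\sqrt2}(1,1)^t$ if $k\notin S$ and $w_k=v=\tfrac1{\sqrt2}(1,-1)^t$ if $k\in S$, under the identification $\mathbb{R}^X=(\mathbb{R}^{\{0,1\}})^{\otimes D}$). *)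

theory Defs
  imports Complex_Main
begin

text \<open>Vertices of Q_D: sequences x = (x_1,...,x_D) in {0,1}^D, represented as
  functions nat => nat with values in {0,1} on {1..D} and 0 elsewhere.
  Vectors in R^X are functions on vertices (only values on X matter);
  matrices are functions X => X => real.\<close>

definition hcube :: "nat \<Rightarrow> (nat \<Rightarrow> nat) set" where
  "hcube D = {x. (\<forall>k\<in>{1..D}. x k \<in> {0,1}) \<and> (\<forall>k. k \<notin> {1..D} \<longrightarrow> x k = 0)}"

definition hadj :: "nat \<Rightarrow> (nat \<Rightarrow> nat) \<Rightarrow> (nat \<Rightarrow> nat) \<Rightarrow> real" where
  "hadj D x y = (if card {k\<in>{1..D}. x k \<noteq> y k} = 1 then 1 else 0)"

definition alpha_star :: "nat \<Rightarrow> (nat \<Rightarrow> nat) \<Rightarrow> (nat \<Rightarrow> nat) \<Rightarrow> real" where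
  "alpha_star i x y = (if x = y then (if x i = 0 then 1 else -1) else 0)"

definition mmul :: "nat \<Rightarrow> ((nat \<Rightarrow> nat) \<Rightarrow> (nat \<Rightarrow> nat) \<Rightarrow> real)
    \<Rightarrow> ((nat \<Rightarrow> nat) \<Rightarrow> (nat \<Rightarrow> nat) \<Rightarrow> real) \<Rightarrow> (nat \<Rightarrow> nat) \<Rightarrow> (nat \<Rightarrow> nat) \<Rightarrow> real" where
  "mmul D M N x y = (\<Sum>z\<in>hcube D. M x z * N z y)"

definition mvec :: "nat \<Rightarrow> ((nat \<Rightarrow> nat) \<Rightarrow> (nat \<Rightarrow> nat) \<Rightarrow> real)
    \<Rightarrow> ((nat \<Rightarrow> nat) \<Rightarrow> real) \<Rightarrow> (nat \<Rightarrow> nat) \<Rightarrow> real" where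
  "mvec D M v x = (\<Sum>y\<in>hcube D. M x y * v y)"

definition Bmat :: "nat \<Rightarrow> nat \<Rightarrow> nat \<Rightarrow> (nat \<Rightarrow> nat) \<Rightarrow> (nat \<Rightarrow> nat) \<Rightarrow> real" where
  "Bmat D i j x y = mmul D (mmul D (alpha_star i) (hadj D)) (alpha_star j) x y
                  - mmul D (mmul D (alpha_star j) (hadj D)) (alpha_star i) x y"

definition wvec :: "nat \<Rightarrow> nat set \<Rightarrow> (nat \<Rightarrow> nat) \<Rightarrow> real" where
  "wvec D S x = 2 powr (- real D / 2) * (\<Prod>k\<in>S. (-1) ^ (x k))"

end

theory Submission
  imports Defs "HOL-Library.FuncSet"
begin

text \<open>Write \<open>s\<^sub>k x = (-1)^x\<^sub>k\<close>, so that \<open>\<alpha>\<^sup>*\<^sub>k\<close> is the diagonal matrix of \<open>s\<^sub>k\<close> and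
  \<open>w\<^sub>S\<close> is a multiple of \<open>\<Prod>\<^sub>k\<^sub>\<in>\<^sub>S s\<^sub>k\<close>. Hence \<open>B\<^sub>i\<^sub>j x y = A x y (s\<^sub>i x s\<^sub>j y - s\<^sub>j x s\<^sub>i y)\<close>, and
  in \<open>(B\<^sub>i\<^sub>j w\<^sub>S)(x)\<close> only the two neighbours of \<open>x\<close> obtained by flipping coordinate
  \<open>i\<close> or \<open>j\<close> survive. Flipping coordinate \<open>k\<close> multiplies \<open>w\<^sub>S\<close> by \<open>-1\<close> iff \<open>k \<in> S\<close>,
  so the result is \<open>2(\<epsilon>\<^sub>i - \<epsilon>\<^sub>j) s\<^sub>i s\<^sub>j w\<^sub>S\<close> with \<open>\<epsilon>\<^sub>k = \<plusminus>1\<close>, and \<open>s\<^sub>i s\<^sub>j w\<^sub>S\<close> is the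
  character of the symmetric difference of \<open>S\<close> and \<open>{i, j}\<close>.\<close>

definition spin :: "nat \<Rightarrow> (nat \<Rightarrow> nat) \<Rightarrow> real" where
  "spin k x = (-1) ^ x k"

definition flip :: "nat \<Rightarrow> (nat \<Rightarrow> nat) \<Rightarrow> (nat \<Rightarrow> nat)" where
  "flip k x = x(k := 1 - x k)"

lemma wvec_eq_prod_spin: "wvec D S x = 2 powr (- real D / 2) * (\<Prod>k\<in>S. spin k x)"
  unfolding wvec_def spin_def ..

lemma hcube_le_1: "x \<in> hcube D \<Longrightarrow> x k \<le> 1"
  unfolding hcube_def by (cases "k \<in> {1..D}") fastforce+

lemma finite_hcube: "finite (hcube D)"
proof -
  let ?extend = "\<lambda>g k. if k \<in> {1..D} then g k else 0"
  have "hcube D \<subseteq> ?extend ` ({1..D} \<rightarrow>\<^sub>E {0::nat, 1})"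
  proof
    fix x assume x: "x \<in> hcube D"
    have "restrict x {1..D} \<in> {1..D} \<rightarrow>\<^sub>E {0, 1}" and "x = ?extend (restrict x {1..D})"
      using x unfolding hcube_def by (auto simp: fun_eq_iff)
    then show "x \<in> ?extend ` ({1..D} \<rightarrow>\<^sub>E {0, 1})" by blast
  qed
  moreover have "finite ({1..D} \<rightarrow>\<^sub>E {0::nat, 1})" by (rule finite_PiE) auto
  ultimately show ?thesis by (meson finite_imageI finite_subset)
qed

lemma spin_sq: "spin k x * spin k x = 1"
  unfolding spin_def by (simp add: power_mult_distrib[symmetric])

lemma spin_flip:
  assumes "x k \<le> 1"
  shows "spin m (flip k x) = (if m = k then - spin m x else spin m x)"
  using assms unfolding spin_def flip_def by (cases "x k") auto

lemma alpha_star_eq_spin: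
  "x \<in> hcube D \<Longrightarrow> alpha_star i x y = (if x = y then spin i x else 0)"
  using hcube_le_1[of x D i] unfolding alpha_star_def spin_def by (cases "x i") auto


lemma mmul_alpha_star_left:
  assumes "x \<in> hcube D"
  shows "mmul D (alpha_star i) M x y = spin i x * M x y"
proof -
  have "mmul D (alpha_star i) M x y = (\<Sum>z\<in>hcube D. if x = z then spin i x * M x y else 0)"
    unfolding mmul_def using assms by (intro sum.cong) (auto simp: alpha_star_eq_spin)
  then show ?thesis using assms finite_hcube by simp
qed

lemma mmul_alpha_star_right:
  assumes "y \<in> hcube D"
  shows "mmul D M (alpha_star i) x y = M x y * spin i y"
proof -
  have "mmul D M (alpha_star i) x y = (\<Sum>z\<in>hcube D. if z = y then M x y * spin i y else 0)"
    unfolding mmul_def using assms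
    by (intro sum.cong) (auto simp: alpha_star_eq_spin split: if_splits)
  then show ?thesis using assms finite_hcube by simp
qed

lemma Bmat_eq:
  assumes "x \<in> hcube D" "y \<in> hcube D"
  shows "Bmat D i j x y = hadj D x y * (spin i x * spin j y - spin j x * spin i y)"
  using assms
  by (simp add: Bmat_def mmul_alpha_star_left mmul_alpha_star_right algebra_simps)


lemma flip_in_hcube: "x \<in> hcube D \<Longrightarrow> k \<in> {1..D} \<Longrightarrow> flip k x \<in> hcube D"
  unfolding hcube_def flip_def by auto

lemma inj_on_flip: "inj_on (\<lambda>k. flip k x) A"
proof (rule inj_onI)
  fix k m assume "flip k x = flip m x"
  then have "flip k x k = flip m x k" by simp
  then show "k = m" unfolding flip_def by (cases "k = m") (auto, arith)
qed

lemma hadj_flip: "k \<in> {1..D} \<Longrightarrow> hadj D x (flip k x) = 1"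
proof -
  assume k: "k \<in> {1..D}"
  have "x k \<noteq> 1 - x k" by arith
  then have "{m\<in>{1..D}. x m \<noteq> flip k x m} = {k}" using k by (auto simp: flip_def)
  then show ?thesis unfolding hadj_def by simp
qed

lemma hcube_eq_flip:
  assumes x: "x \<in> hcube D" and y: "y \<in> hcube D"
    and diff: "{m\<in>{1..D}. x m \<noteq> y m} = {k}"
  shows "y = flip k x"
proof
  fix m
  have kD: "k \<in> {1..D}" and "x k \<noteq> y k" using diff by auto
  moreover have "x k \<le> 1" "y k \<le> 1" using x y hcube_le_1 by blast+
  moreover have "x m = y m" if "m \<noteq> k"
    using that diff x y unfolding hcube_def by (cases "m \<in> {1..D}") auto
  ultimately show "y m = flip k x m" unfolding flip_def by (cases "m = k") auto
qed

lemma hadj_eq_0: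
  assumes "x \<in> hcube D" "y \<in> hcube D" "y \<notin> (\<lambda>k. flip k x) ` {1..D}"
  shows "hadj D x y = 0"
proof (rule ccontr)
  assume "hadj D x y \<noteq> 0"
  then have "card {m\<in>{1..D}. x m \<noteq> y m} = 1" unfolding hadj_def by (auto split: if_splits)
  then obtain k where k: "{m\<in>{1..D}. x m \<noteq> y m} = {k}" by (auto simp: card_Suc_eq)
  then have "k \<in> {1..D}" by auto
  with hcube_eq_flip[OF assms(1,2) k] assms(3) show False by blast
qed

lemma sum_hadj_eq_sum_flip:
  assumes x: "x \<in> hcube D"
  shows "(\<Sum>y\<in>hcube D. hadj D x y * f y) = (\<Sum>k\<in>{1..D}. f (flip k x))"
proof -
  have "(\<lambda>k. flip k x) ` {1..D} \<subseteq> hcube D" using flip_in_hcube x by blast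
  then have "(\<Sum>y\<in>hcube D. hadj D x y * f y) = (\<Sum>y\<in>(\<lambda>k. flip k x) ` {1..D}. hadj D x y * f y)"
    using finite_hcube hadj_eq_0 x by (intro sum.mono_neutral_right) auto
  also have "\<dots> = (\<Sum>k\<in>{1..D}. hadj D x (flip k x) * f (flip k x))"
    by (simp add: sum.reindex[OF inj_on_flip])
  also have "\<dots> = (\<Sum>k\<in>{1..D}. f (flip k x))" by (simp add: hadj_flip)
  finally show ?thesis .
qed


lemma wvec_flip:
  assumes "finite S" "x k \<le> 1"
  shows "wvec D S (flip k x) = (if k \<in> S then -1 else 1) * wvec D S x"
proof -
  have "(\<Prod>m\<in>S. spin m (flip k x)) = (\<Prod>m\<in>S. (if m = k then -1 else 1) * spin m x)"
    using assms(2) by (intro prod.cong) (auto simp: spin_flip)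
  also have "\<dots> = (\<Prod>m\<in>S. if m = k then -1 else 1) * (\<Prod>m\<in>S. spin m x)"
    by (rule prod.distrib)
  also have "(\<Prod>m\<in>S. if m = k then -1 else (1::real)) = (if k \<in> S then -1 else 1)"
    using assms(1) by (simp add: prod.delta)
  finally show ?thesis by (simp add: wvec_eq_prod_spin)
qed

lemma spin_mult_wvec_insert:
  "finite S \<Longrightarrow> k \<notin> S \<Longrightarrow> spin k x * wvec D S x = wvec D (insert k S) x"
  by (simp add: wvec_eq_prod_spin)

lemma spin_mult_wvec_remove:
  assumes "finite S" "k \<in> S"
  shows "spin k x * wvec D S x = wvec D (S - {k}) x"
proof -
  have "wvec D S x = spin k x * wvec D (S - {k}) x"
    using assms spin_mult_wvec_insert[of "S - {k}" k] by (simp add: insert_absorb)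
  then show ?thesis by (simp add: mult.assoc[symmetric] spin_sq)
qed

lemma spin_spin_mult_wvec_swap:
  assumes "finite S" "i \<in> S" "j \<notin> S"
  shows "spin i x * spin j x * wvec D S x = wvec D ((S \<union> {j}) - {i}) x"
proof -
  have "(S \<union> {j}) - {i} = insert j (S - {i})" using assms by auto
  moreover have "spin i x * spin j x * wvec D S x = spin j x * (spin i x * wvec D S x)"
    by (simp add: ac_simps)
  ultimately show ?thesis
    using assms by (simp add: spin_mult_wvec_remove spin_mult_wvec_insert)
qed

lemma mvec_Bmat_wvec:
  assumes x: "x \<in> hcube D" and ij: "i \<noteq> j" "i \<in> {1..D}" "j \<in> {1..D}" and S: "finite S"
  shows "mvec D (Bmat D i j) (wvec D S) x
    = 2 * ((if i \<in> S then -1 else 1) - (if j \<in> S then -1 else 1))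
        * (spin i x * spin j x * wvec D S x)"
proof -
  define g where "g y = (spin i x * spin j y - spin j x * spin i y) * wvec D S y" for y
  have le1: "x k \<le> 1" for k using x hcube_le_1 by blast
  have "mvec D (Bmat D i j) (wvec D S) x = (\<Sum>y\<in>hcube D. hadj D x y * g y)"
    unfolding mvec_def g_def using x by (intro sum.cong) (auto simp: Bmat_eq)
  also have "\<dots> = (\<Sum>k\<in>{1..D}. g (flip k x))" by (rule sum_hadj_eq_sum_flip[OF x])
  also have "\<dots> = (\<Sum>k\<in>{i, j}. g (flip k x))"
    \<comment> \<open>flipping any other coordinate leaves \<open>s\<^sub>i\<close> and \<open>s\<^sub>j\<close> unchanged, so the two terms of \<open>g\<close> cancel\<close>
    using ij le1 by (intro sum.mono_neutral_right) (auto simp: g_def spin_flip)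
  also have "\<dots> = g (flip i x) + g (flip j x)" using ij by simp
  also have "g (flip i x) = 2 * (if i \<in> S then -1 else 1) * (spin i x * spin j x * wvec D S x)"
    using ij spin_flip[of x i i] spin_flip[of x i j] wvec_flip[OF S, of x i] le1[of i]
    by (simp add: g_def)
  also have "g (flip j x) = - 2 * (if j \<in> S then -1 else 1) * (spin i x * spin j x * wvec D S x)"
    using ij spin_flip[of x j i] spin_flip[of x j j] wvec_flip[OF S, of x j] le1[of j]
    by (simp add: g_def)
  finally show ?thesis by (simp add: algebra_simps)
qed

theorem lemma9p6:
  fixes D i j :: nat and S :: "nat set"
  assumes "D \<ge> 1" and "1 \<le> i" and "i < j" and "j \<le> D" and "S \<subseteq> {1..D}"
  shows "\<forall>x\<in>hcube D. mvec D (Bmat D i j) (wvec D S) x =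
    (if i \<in> S \<and> j \<notin> S then - 4 * wvec D ((S \<union> {j}) - {i}) x
     else if i \<notin> S \<and> j \<in> S then 4 * wvec D ((S \<union> {i}) - {j}) x
     else 0)"
proof
  fix x assume x: "x \<in> hcube D"
  have S: "finite S" using assms(5) finite_subset by blast
  have main: "mvec D (Bmat D i j) (wvec D S) x
    = 2 * ((if i \<in> S then -1 else 1) - (if j \<in> S then -1 else 1))
        * (spin i x * spin j x * wvec D S x)"
    using assms by (intro mvec_Bmat_wvec[OF x _ _ _ S]) auto
  show "mvec D (Bmat D i j) (wvec D S) x =
    (if i \<in> S \<and> j \<notin> S then - 4 * wvec D ((S \<union> {j}) - {i}) x
     else if i \<notin> S \<and> j \<in> S then 4 * wvec D ((S \<union> {i}) - {j}) x
     else 0)"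
    using spin_spin_mult_wvec_swap[OF S, of i j x] spin_spin_mult_wvec_swap[OF S, of j i x]
    unfolding main by (auto simp: mult.commute[of "spin i x"])
qed

end
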